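(* In the Schröder case there is a constant $c\in(0,\infty)$ such that \[\sum_{1\le k\le\delta/\varepsilon_n^2}\mathbf{P}(Z_n=k)\,\mathbf{P}(S_k\ge\varepsilon_nk)\le c\,\delta^\alpha\varepsilon_n^{-2\alpha}m^{-\alpha n}\qquad\text{for all }\delta>0,\ \varepsilon_n>0,\ n\ge1.\]
   Context: $Z=(Z_n)_{n\ge0}$ is a Galton–Watson process with $Z_0=1$, offspring law $\{p_k\}$ with mean $m\in(1,\infty)$ and $\mathbf{E}Z_1\log Z_1<\infty$. Independently, $(X_n)$ are i.i.d. with $\mathbf{E}X_1=0$, $\mathbf{E}X_1^2\in(0,\infty)$; $S_k:=X_1+\dots+X_k$. $f$ is the offspring generating function, $q$ the extinction probability, $\alpha$ defined by $f'(q)=m^{-\alpha}$; Schröder case: $p_0+p_1>0$, i.e. $\alpha\in(0,\infty)$. *)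

theory Defs
  imports "HOL-Probability.Probability"
begin

fun sum_iid_pmf :: "nat pmf \<Rightarrow> nat \<Rightarrow> nat pmf" where
  "sum_iid_pmf p 0 = return_pmf 0"
| "sum_iid_pmf p (Suc k) = bind_pmf (sum_iid_pmf p k) (\<lambda>s. map_pmf (\<lambda>x. s + x) p)"

text \<open>Law of Z_n for a Galton--Watson process with Z_0 = 1 and offspring law p.\<close>
fun gw_pmf :: "nat pmf \<Rightarrow> nat \<Rightarrow> nat pmf" where
  "gw_pmf p 0 = return_pmf 1"
| "gw_pmf p (Suc n) = bind_pmf (gw_pmf p n) (\<lambda>z. sum_iid_pmf p z)"

definition offspring_mean :: "nat pmf \<Rightarrow> real" where
  "offspring_mean p = (\<Sum>k. pmf p k * real k)"

definition gen_fun :: "nat pmf \<Rightarrow> real \<Rightarrow> real" where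
  "gen_fun p s = (\<Sum>k. pmf p k * s ^ k)"

definition gen_fun_deriv :: "nat pmf \<Rightarrow> real \<Rightarrow> real" where
  "gen_fun_deriv p s = (\<Sum>k. real k * pmf p k * s ^ (k - 1))"

definition extinction_prob :: "nat pmf \<Rightarrow> real" where
  "extinction_prob p = Inf {s\<in>{0..1}. gen_fun p s = s}"

text \<open>alpha defined by f'(q) = m^(-alpha).\<close>
definition schroeder_alpha :: "nat pmf \<Rightarrow> real" where
  "schroeder_alpha p = - ln (gen_fun_deriv p (extinction_prob p)) / ln (offspring_mean p)"

end

theory Submission
  imports Defs
begin

text \<open>
  With \<open>s = 1 - 1/(2x)\<close>
  every \<open>k \<le> x\<close> has \<open>s^k \<ge> 1/2\<close>, so this probability is at most \<open>2 (f\<^sub>n(s) - f\<^sub>n(0))\<close>, where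
  the generating function \<open>f\<^sub>n\<close> of \<open>Z\<^sub>n\<close> is the \<open>n\<close>-th iterate of the offspring generating
  function \<open>f\<close>.

  Fix \<open>r \<in> (q, 1)\<close> with \<open>f(r) < r\<close>. On \<open>[q, r]\<close> the iterates converge to the attracting fixed
  point \<open>q\<close> at the rate \<open>\<gamma> = f'(q) = m^(-\<alpha>)\<close>, up to a constant, because the slope of \<open>f\<close>
  lies below its chords; also \<open>q - f\<^sub>n(0) \<le> \<gamma>^n\<close>. A point \<open>s > r\<close> needs \<open>j\<close> steps to enter
  \<open>[q, r]\<close>, and each of them multiplies the distance \<open>v\<close> to \<open>1\<close> by at least \<open>m exp(-K E(v))\<close>
  with \<open>E(v) = E[Z\<^sub>1 min(1, v Z\<^sub>1)]\<close>. These distances grow geometrically, so the condition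
  \<open>E[Z\<^sub>1 log Z\<^sub>1] < \<infinity>\<close> bounds the sum of the \<open>E(v)\<close> and gives \<open>m^j \<le> B/(1 - s)\<close>. Hence
  \<open>f\<^sub>n(s) - q = O(\<gamma>^(n - j)) = O(\<gamma>^n (1 - s)^(-\<alpha>))\<close>.
\<close>

section \<open>Generating functions of the Galton--Watson process\<close>

lemma summable_pmf_nat: "summable (\<lambda>k::nat. pmf \<mu> k)"
  and suminf_pmf_nat: "(\<Sum>k. pmf \<mu> k) = 1"
proof -
  have "(\<Sum>k. ennreal (pmf \<mu> k)) = (\<integral>\<^sup>+ k. pmf \<mu> k \<partial>count_space UNIV)"
    by (simp add: nn_integral_count_space_nat)
  also have "\<dots> = 1"
    by (simp add: nn_integral_pmf)
  finally have sum_1: "(\<Sum>k. ennreal (pmf \<mu> k)) = 1" .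
  show summable: "summable (\<lambda>k::nat. pmf \<mu> k)"
    by (rule summable_suminf_not_top) (use sum_1 in auto)
  have "ennreal (\<Sum>k. pmf \<mu> k) = 1"
    using sum_1 suminf_ennreal2[OF pmf_nonneg summable] by simp
  then show "(\<Sum>k. pmf \<mu> k) = 1"
    by (simp add: suminf_nonneg summable)
qed

lemma summable_pmf_times_power:
  assumes "0 \<le> s" "s \<le> 1"
  shows "summable (\<lambda>k. pmf \<mu> k * s ^ k)"
  by (rule summable_comparison_test[OF _ summable_pmf_nat[of \<mu>]])
     (use assms in \<open>auto intro!: exI[of _ 0] mult_left_le power_le_one\<close>)

lemma gen_fun_nonneg: "0 \<le> s \<Longrightarrow> s \<le> 1 \<Longrightarrow> 0 \<le> gen_fun \<mu> s"
  unfolding gen_fun_def by (rule suminf_nonneg[OF summable_pmf_times_power]) auto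

lemma gen_fun_le_1: "0 \<le> s \<Longrightarrow> s \<le> 1 \<Longrightarrow> gen_fun \<mu> s \<le> 1"
  unfolding gen_fun_def
  by (rule order.trans[OF suminf_le[OF _ summable_pmf_times_power summable_pmf_nat]])
     (auto simp: suminf_pmf_nat intro!: mult_left_le power_le_one)

lemma gen_fun_1 [simp]: "gen_fun \<mu> 1 = 1"
  unfolding gen_fun_def by (simp add: suminf_pmf_nat)

lemma gen_fun_0 [simp]: "gen_fun \<mu> 0 = pmf \<mu> 0"
  unfolding gen_fun_def by (subst suminf_finite[of "{0}"]) auto

lemma gen_fun_return_pmf [simp]: "gen_fun (return_pmf j) s = s ^ j"
  unfolding gen_fun_def by (subst suminf_finite[of "{j}"]) (auto simp: indicator_def)

lemma funpow_gen_fun_nonneg: "0 \<le> s \<Longrightarrow> s \<le> 1 \<Longrightarrow> 0 \<le> (gen_fun \<mu> ^^ n) s"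
  and funpow_gen_fun_le_1: "0 \<le> s \<Longrightarrow> s \<le> 1 \<Longrightarrow> (gen_fun \<mu> ^^ n) s \<le> 1"
  by (induction n) (auto simp: gen_fun_nonneg gen_fun_le_1)

lemma nn_integral_power_eq_gen_fun:
  assumes "0 \<le> s" "s \<le> 1"
  shows "(\<integral>\<^sup>+ k. ennreal (s ^ k) \<partial>measure_pmf \<mu>) = ennreal (gen_fun \<mu> s)"
proof -
  have "(\<integral>\<^sup>+ k. ennreal (s ^ k) \<partial>measure_pmf \<mu>) = (\<Sum>k. ennreal (pmf \<mu> k * s ^ k))"
    by (simp add: nn_integral_measure_pmf nn_integral_count_space_nat ennreal_mult' assms)
  also have "\<dots> = ennreal (gen_fun \<mu> s)"
    unfolding gen_fun_def
    by (rule suminf_ennreal2) (use assms summable_pmf_times_power in auto)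
  finally show ?thesis .
qed

lemma gen_fun_sum_iid_pmf:
  assumes "0 \<le> s" "s \<le> 1"
  shows "gen_fun (sum_iid_pmf p k) s = gen_fun p s ^ k"
proof (induction k)
  case (Suc k)
  have "ennreal (gen_fun (sum_iid_pmf p (Suc k)) s)
      = (\<integral>\<^sup>+ a. ennreal (s ^ a) * (\<integral>\<^sup>+ x. ennreal (s ^ x) \<partial>measure_pmf p) \<partial>measure_pmf (sum_iid_pmf p k))"
    by (simp flip: nn_integral_power_eq_gen_fun[OF assms]
        add: power_add ennreal_mult' assms nn_integral_cmult)
  also have "\<dots> = ennreal (gen_fun (sum_iid_pmf p k) s * gen_fun p s)"
    by (simp add: nn_integral_power_eq_gen_fun[OF assms] nn_integral_multc ennreal_mult'
        gen_fun_nonneg assms)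
  finally show ?case
    using Suc by (simp add: gen_fun_nonneg assms mult.commute)
qed simp

lemma gen_fun_gw_pmf:
  assumes "0 \<le> s" "s \<le> 1"
  shows "gen_fun (gw_pmf p n) s = (gen_fun p ^^ n) s"
  using assms
proof (induction n arbitrary: s)
  case (Suc n)
  have "ennreal (gen_fun (gw_pmf p (Suc n)) s)
      = (\<integral>\<^sup>+ z. ennreal (gen_fun p s ^ z) \<partial>measure_pmf (gw_pmf p n))"
    by (simp flip: nn_integral_power_eq_gen_fun gen_fun_sum_iid_pmf add: Suc.prems)
  also have "\<dots> = ennreal (gen_fun (gw_pmf p n) (gen_fun p s))"
    by (rule nn_integral_power_eq_gen_fun) (use Suc.prems in \<open>auto intro: gen_fun_nonneg gen_fun_le_1\<close>)
  finally show ?case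
    using Suc.IH[of "gen_fun p s"] Suc.prems
    by (simp add: gen_fun_nonneg gen_fun_le_1 funpow_gen_fun_nonneg funpow_swap1)
qed simp

section \<open>Slopes of the offspring generating function\<close>

definition power_slope :: "nat \<Rightarrow> real \<Rightarrow> real \<Rightarrow> real" where
  "power_slope k a b = (\<Sum>i<k. a ^ (k - Suc i) * b ^ i)"

lemma power_diff_eq_power_slope: "b ^ k - a ^ k = (b - a) * power_slope k a b"
  unfolding power_slope_def by (rule power_diff_sumr2)

lemma power_slope_diag: "power_slope k b b = real k * b ^ (k - 1)"
proof -
  have "power_slope k b b = (\<Sum>i<k. b ^ (k - 1))"
    unfolding power_slope_def by (rule sum.cong) (auto simp flip: power_add)
  then show ?thesis by simp
qed

lemma power_slope_nonneg: "0 \<le> a \<Longrightarrow> 0 \<le> b \<Longrightarrow> 0 \<le> power_slope k a b"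
  unfolding power_slope_def by (auto intro!: sum_nonneg)

lemma power_slope_le: "0 \<le> a \<Longrightarrow> a \<le> 1 \<Longrightarrow> 0 \<le> b \<Longrightarrow> b \<le> 1 \<Longrightarrow> power_slope k a b \<le> real k"
proof -
  assume "0 \<le> a" "a \<le> 1" "0 \<le> b" "b \<le> 1"
  then have "power_slope k a b \<le> (\<Sum>i<k. 1)"
    unfolding power_slope_def by (intro sum_mono) (auto intro!: mult_le_one power_le_one)
  then show ?thesis by simp
qed

lemma power_slope_mono:
  "0 \<le> a \<Longrightarrow> a \<le> a' \<Longrightarrow> 0 \<le> b \<Longrightarrow> b \<le> b' \<Longrightarrow> power_slope k a b \<le> power_slope k a' b'"
  unfolding power_slope_def by (auto intro!: sum_mono mult_mono power_mono)

lemma power_diff_le_chord: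
  fixes q b r :: real
  assumes "0 \<le> q" "q \<le> b" "b \<le> r" "q < r"
  shows "b ^ i - q ^ i \<le> (b - q) * ((r ^ i - q ^ i) / (r - q))"
proof -
  have "b ^ i - q ^ i = (b - q) * power_slope i q b"
    by (rule power_diff_eq_power_slope)
  also have "\<dots> \<le> (b - q) * power_slope i q r"
    using assms by (intro mult_left_mono power_slope_mono) auto
  also have "power_slope i q r = (r ^ i - q ^ i) / (r - q)"
    using assms power_diff_eq_power_slope[of r i q] by simp
  finally show ?thesis .
qed

lemma power_slope_le_chord:
  assumes "0 \<le> q" "q \<le> b" "b \<le> r" "q < r"
  shows "power_slope k q b - power_slope k q q
    \<le> (b - q) / (r - q) * (power_slope k q r - power_slope k q q)"
proof -
  have "power_slope k q b - power_slope k q q = (\<Sum>i<k. q ^ (k - Suc i) * (b ^ i - q ^ i))"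
    unfolding power_slope_def by (simp add: sum_subtractf right_diff_distrib)
  also have "\<dots> \<le> (\<Sum>i<k. q ^ (k - Suc i) * ((b - q) * ((r ^ i - q ^ i) / (r - q))))"
    using assms by (intro sum_mono mult_left_mono power_diff_le_chord) auto
  also have "\<dots> = (b - q) / (r - q) * (\<Sum>i<k. q ^ (k - Suc i) * r ^ i - q ^ (k - Suc i) * q ^ i)"
    unfolding sum_distrib_left by (rule sum.cong) (use assms in \<open>simp_all add: field_simps\<close>)
  also have "\<dots> = (b - q) / (r - q) * (power_slope k q r - power_slope k q q)"
    unfolding power_slope_def by (simp add: sum_subtractf)
  finally show ?thesis .
qed

text \<open>The divided difference \<open>(f(b) - f(a)) / (b - a)\<close> of the offspring generating function \<open>f\<close>,
  written as a series so that it also makes sense on the diagonal, where it is \<open>f'(b)\<close>.\<close>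

definition gen_fun_slope :: "nat pmf \<Rightarrow> real \<Rightarrow> real \<Rightarrow> real" where
  "gen_fun_slope p a b = (\<Sum>k. pmf p k * power_slope k a b)"

locale finite_mean_offspring =
  fixes p :: "nat pmf"
  assumes summable_mean: "summable (\<lambda>k. pmf p k * real k)"
begin

lemma summable_gen_fun_slope:
  assumes "0 \<le> a" "a \<le> 1" "0 \<le> b" "b \<le> 1"
  shows "summable (\<lambda>k. pmf p k * power_slope k a b)"
proof (rule summable_comparison_test[OF _ summable_mean], intro exI allI impI)
  fix k :: nat
  show "norm (pmf p k * power_slope k a b) \<le> pmf p k * real k"
    using assms by (simp add: power_slope_nonneg power_slope_le mult_left_mono)
qed

lemma gen_fun_slope_nonneg:
  "0 \<le> a \<Longrightarrow> a \<le> 1 \<Longrightarrow> 0 \<le> b \<Longrightarrow> b \<le> 1 \<Longrightarrow> 0 \<le> gen_fun_slope p a b"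
  unfolding gen_fun_slope_def
  by (rule suminf_nonneg[OF summable_gen_fun_slope]) (auto intro!: mult_nonneg_nonneg power_slope_nonneg)

lemma gen_fun_slope_mono:
  "0 \<le> a \<Longrightarrow> a \<le> a' \<Longrightarrow> a' \<le> 1 \<Longrightarrow> 0 \<le> b \<Longrightarrow> b \<le> b' \<Longrightarrow> b' \<le> 1
    \<Longrightarrow> gen_fun_slope p a b \<le> gen_fun_slope p a' b'"
  unfolding gen_fun_slope_def
  by (rule suminf_le[OF _ summable_gen_fun_slope summable_gen_fun_slope])
     (auto intro!: mult_left_mono power_slope_mono)

lemma pmf_times_power_slope_le_gen_fun_slope:
  assumes "0 \<le> a" "a \<le> 1" "0 \<le> b" "b \<le> 1"
  shows "pmf p k * power_slope k a b \<le> gen_fun_slope p a b"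
proof -
  have "\<And>n. 0 \<le> pmf p n * power_slope n a b"
    using assms by (simp add: power_slope_nonneg)
  then show ?thesis
    unfolding gen_fun_slope_def using sum_le_suminf[OF summable_gen_fun_slope[OF assms], of "{k}"]
    by simp
qed

lemma gen_fun_diff:
  assumes "0 \<le> a" "a \<le> 1" "0 \<le> b" "b \<le> 1"
  shows "gen_fun p b - gen_fun p a = (b - a) * gen_fun_slope p a b"
proof -
  have "gen_fun p b - gen_fun p a = (\<Sum>k. pmf p k * b ^ k - pmf p k * a ^ k)"
    unfolding gen_fun_def by (rule suminf_diff) (use assms summable_pmf_times_power in auto)
  also have "\<dots> = (\<Sum>k. (b - a) * (pmf p k * power_slope k a b))"
    by (rule suminf_cong) (simp add: power_diff_eq_power_slope flip: right_diff_distrib)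
  also have "\<dots> = (b - a) * gen_fun_slope p a b"
    unfolding gen_fun_slope_def by (rule suminf_mult[OF summable_gen_fun_slope[OF assms]])
  finally show ?thesis .
qed

lemma gen_fun_deriv_eq_slope: "gen_fun_deriv p b = gen_fun_slope p b b"
  unfolding gen_fun_deriv_def gen_fun_slope_def by (simp add: power_slope_diag mult_ac)

lemma gen_fun_mono: "0 \<le> a \<Longrightarrow> a \<le> b \<Longrightarrow> b \<le> 1 \<Longrightarrow> gen_fun p a \<le> gen_fun p b"
  using gen_fun_diff[of a b] gen_fun_slope_nonneg[of a b] by (metis diff_ge_0_iff_ge mult_nonneg_nonneg order.trans)

lemma funpow_gen_fun_mono:
  "0 \<le> a \<Longrightarrow> a \<le> b \<Longrightarrow> b \<le> 1 \<Longrightarrow> (gen_fun p ^^ n) a \<le> (gen_fun p ^^ n) b"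
  by (induction n)
     (auto intro!: gen_fun_mono funpow_gen_fun_nonneg funpow_gen_fun_le_1)

lemma continuous_on_gen_fun: "continuous_on {0..1} (gen_fun p)"
proof -
  have "(gen_fun_slope p 1 1)-lipschitz_on {0..1} (gen_fun p)"
  proof (rule lipschitz_onI)
    fix x y :: real
    assume "x \<in> {0..1}" "y \<in> {0..1}"
    then have xy: "0 \<le> x" "x \<le> 1" "0 \<le> y" "y \<le> 1" by auto
    have "\<bar>gen_fun p x - gen_fun p y\<bar> = \<bar>x - y\<bar> * gen_fun_slope p y x"
      using gen_fun_diff[of y x] gen_fun_slope_nonneg[of y x] xy by (simp add: abs_mult)
    also have "\<dots> \<le> \<bar>x - y\<bar> * gen_fun_slope p 1 1"
      using xy by (intro mult_left_mono gen_fun_slope_mono) auto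
    finally show "dist (gen_fun p x) (gen_fun p y) \<le> gen_fun_slope p 1 1 * dist x y"
      by (simp add: dist_real_def mult_ac)
  qed (simp add: gen_fun_slope_nonneg)
  then show ?thesis by (rule lipschitz_on_continuous_on)
qed

lemma gen_fun_slope_le_chord:
  assumes "0 \<le> q" "q \<le> b" "b \<le> r" "q < r" "r \<le> 1"
  shows "gen_fun_slope p q b - gen_fun_slope p q q
    \<le> (b - q) * ((gen_fun_slope p q r - gen_fun_slope p q q) / (r - q))"
proof -
  define c where "c = (b - q) / (r - q)"
  have summable: "summable (\<lambda>k. pmf p k * power_slope k q x)" if "x \<in> {b, q, r}" for x
    using assms that by (intro summable_gen_fun_slope) auto
  have "gen_fun_slope p q b - gen_fun_slope p q q
      = (\<Sum>k. pmf p k * power_slope k q b - pmf p k * power_slope k q q)"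
    unfolding gen_fun_slope_def by (rule suminf_diff) (auto intro: summable)
  also have "\<dots> \<le> (\<Sum>k. c * (pmf p k * power_slope k q r - pmf p k * power_slope k q q))"
  proof (rule suminf_le)
    fix k
    show "pmf p k * power_slope k q b - pmf p k * power_slope k q q
        \<le> c * (pmf p k * power_slope k q r - pmf p k * power_slope k q q)"
      using mult_left_mono[OF power_slope_le_chord[OF assms(1-4), of k] pmf_nonneg[of p k]]
      by (simp add: c_def algebra_simps)
  qed (auto intro!: summable_diff summable_mult summable)
  also have "\<dots> = c * (gen_fun_slope p q r - gen_fun_slope p q q)"
    unfolding gen_fun_slope_def
    by (subst suminf_diff) (auto intro!: suminf_mult summable_diff summable)
  finally show ?thesis by (simp add: c_def)
qed

end

section \<open>Contraction towards the extinction probability\<close>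

locale supercritical_offspring = finite_mean_offspring +
  assumes mean_gt_1: "offspring_mean p > 1"
begin

abbreviation q :: real where "q \<equiv> extinction_prob p"

abbreviation \<gamma> :: real where "\<gamma> \<equiv> gen_fun_slope p q q"

text \<open>The slope of \<open>f\<close> between \<open>t\<close> and \<open>1\<close> tends to \<open>m > 1\<close> as \<open>t \<rightarrow> 1\<close>, so \<open>f\<close> lies below
  the diagonal somewhere in \<open>(0, 1)\<close>; a partial sum of the mean makes this quantitative.\<close>

lemma exists_gen_fun_less: "\<exists>t. 0 < t \<and> t < 1 \<and> gen_fun p t < t"
proof -
  have "(\<lambda>N. \<Sum>k<N. pmf p k * real k) \<longlonglongrightarrow> offspring_mean p"
    unfolding offspring_mean_def by (rule summable_LIMSEQ[OF summable_mean])
  from order_tendstoD(1)[OF this mean_gt_1] obtain N where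
    "(\<Sum>k<N. pmf p k * real k) > 1" by (auto simp: eventually_sequentially)
  moreover define M where "M = (\<Sum>k<N. pmf p k * real k)"
  ultimately have M: "M > 1" by simp
  have N: "N > 0" using M by (cases N) (auto simp: M_def)
  define c where "c = (1 / M + 1) / 2"
  have c: "0 < c" "c < 1" "c * M > 1"
    using M by (auto simp: c_def field_simps)
  define t where "t = root N c"
  have t: "0 < t" "t < 1" "t ^ N = c"
    using c N by (auto simp: t_def real_root_gt_zero)
  have "c * M = (\<Sum>k<N. pmf p k * (\<Sum>i<k. t ^ N))"
    by (simp add: M_def t sum_distrib_left mult_ac)
  also have "\<dots> \<le> (\<Sum>k<N. pmf p k * power_slope k t 1)"
    unfolding power_slope_def using t
    by (intro sum_mono mult_left_mono) (auto intro!: power_decreasing)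
  also have "\<dots> \<le> gen_fun_slope p t 1"
    unfolding gen_fun_slope_def using t
    by (intro sum_le_suminf summable_gen_fun_slope) (auto intro!: mult_nonneg_nonneg power_slope_nonneg)
  finally have "1 < gen_fun_slope p t 1"
    using c by simp
  moreover have "1 - gen_fun p t = (1 - t) * gen_fun_slope p t 1"
    using gen_fun_diff[of t 1] t by simp
  ultimately have "gen_fun p t < t"
    using t by (smt (verit) mult_less_cancel_left1)
  then show ?thesis
    using t by blast
qed

text \<open>The set of fixed points of the generating function in \<open>[0, 1]\<close> is closed, so its infimum
  \<open>q\<close> is a fixed point; the intermediate value theorem provides one below any point \<open>t\<close>
  with \<open>gen_fun p t < t\<close>.\<close>

lemma gen_fun_extinction_prob: "gen_fun p q = q"
  and extinction_prob_nonneg: "0 \<le> q"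
  and exists_gen_fun_less_above_extinction_prob: "\<exists>r. q < r \<and> r < 1 \<and> gen_fun p r < r"
proof -
  define F where "F = {x \<in> {0..1::real}. gen_fun p x - x = 0}"
  obtain t where t: "0 < t" "t < 1" "gen_fun p t < t"
    using exists_gen_fun_less by blast
  have "continuous_on {0..t} (\<lambda>x. x - gen_fun p x)"
    by (intro continuous_intros continuous_on_subset[OF continuous_on_gen_fun]) (use t in auto)
  then obtain s where s: "0 \<le> s" "s \<le> t" "s - gen_fun p s = 0"
    using IVT'[of "\<lambda>x. x - gen_fun p x" 0 0 t] t gen_fun_nonneg[of 0 p] by auto
  moreover have "s \<noteq> t"
    using s(3) t(3) by auto
  ultimately have "s \<in> F" "s < t"
    using t by (auto simp: F_def)
  moreover have "closed F"
    unfolding F_def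
    by (rule continuous_closed_preimage_constant) (auto intro!: continuous_intros continuous_on_gen_fun)
  moreover have "bdd_below F"
    unfolding F_def by (rule bdd_belowI[of _ 0]) auto
  moreover have "q = Inf F"
    unfolding extinction_prob_def F_def by simp
  ultimately have "q \<in> F" "q < t"
    using closed_contains_Inf[of F] cInf_lower[of s F] by fastforce+
  then show "gen_fun p q = q" "0 \<le> q" "\<exists>r. q < r \<and> r < 1 \<and> gen_fun p r < r"
    using t by (auto simp: F_def)
qed

lemma extinction_prob_less_1: "q < 1"
  using exists_gen_fun_less_above_extinction_prob by auto

lemma funpow_gen_fun_extinction_prob: "(gen_fun p ^^ n) q = q"
  by (induction n) (simp_all add: gen_fun_extinction_prob)

lemma gen_fun_slope_extinction_prob_1: "gen_fun_slope p q 1 = 1"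
  using gen_fun_diff[of q 1] gen_fun_extinction_prob extinction_prob_nonneg extinction_prob_less_1
  by simp

lemma slope_at_extinction_prob_le_1: "\<gamma> \<le> 1"
  using gen_fun_slope_mono[of q q q 1] gen_fun_slope_extinction_prob_1
    extinction_prob_nonneg extinction_prob_less_1
  by simp

lemma extinction_prob_le_gen_fun: "q \<le> w \<Longrightarrow> w \<le> 1 \<Longrightarrow> q \<le> gen_fun p w"
  and gen_fun_le_self: "q \<le> w \<Longrightarrow> w \<le> 1 \<Longrightarrow> gen_fun p w \<le> w"
proof -
  assume w: "q \<le> w" "w \<le> 1"
  have "gen_fun p w - q = (w - q) * gen_fun_slope p q w"
    using gen_fun_diff[of q w] gen_fun_extinction_prob extinction_prob_nonneg w by simp
  moreover have "0 \<le> gen_fun_slope p q w" "gen_fun_slope p q w \<le> 1"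
    using gen_fun_slope_nonneg[of q w] gen_fun_slope_mono[of q q w 1] gen_fun_slope_extinction_prob_1
      extinction_prob_nonneg w
    by auto
  moreover have "0 \<le> w - q"
    using w by simp
  ultimately show "q \<le> gen_fun p w" "gen_fun p w \<le> w"
    by (smt (verit) mult_left_le mult_nonneg_nonneg)+
qed

lemma slope_at_extinction_prob_pos:
  assumes "pmf p 0 + pmf p 1 > 0"
  shows "0 < \<gamma>"
proof -
  have slope_ge: "pmf p k * power_slope k q q \<le> \<gamma>" for k
    using extinction_prob_nonneg extinction_prob_less_1
    by (intro pmf_times_power_slope_le_gen_fun_slope) auto
  show ?thesis
  proof (cases "pmf p 1 > 0")
    case True
    then show ?thesis
      using slope_ge[of 1] by (simp add: power_slope_def)
  next
    case False
    then have "pmf p 0 > 0"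
      using assms pmf_nonneg[of p 1] by linarith
    then have "q \<noteq> 0"
      using gen_fun_extinction_prob by auto
    then have "q > 0"
      using extinction_prob_nonneg by simp
    have "(\<lambda>k. pmf p k * real k) \<noteq> (\<lambda>_. 0)"
      using mean_gt_1 by (auto simp: offspring_mean_def)
    then obtain k where "pmf p k * real k \<noteq> 0"
      by (auto simp: fun_eq_iff)
    then have "0 < pmf p k * power_slope k q q"
      using \<open>q > 0\<close> pmf_nonneg[of p k] by (simp add: power_slope_diag order_le_less)
    then show ?thesis
      using slope_ge[of k] by linarith
  qed
qed

lemma extinction_prob_minus_funpow_gen_fun_0_le: "q - (gen_fun p ^^ n) 0 \<le> \<gamma> ^ n"
proof -
  have "q - (gen_fun p ^^ n) 0 \<le> \<gamma> ^ n * q"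
  proof (induction n)
    case (Suc n)
    define y where "y = (gen_fun p ^^ n) 0"
    have y: "0 \<le> y" "y \<le> q"
      using funpow_gen_fun_nonneg[of 0] funpow_gen_fun_mono[of 0 q n]
        funpow_gen_fun_extinction_prob extinction_prob_nonneg extinction_prob_less_1
      by (auto simp: y_def)
    have "q - gen_fun p y = (q - y) * gen_fun_slope p y q"
      using gen_fun_diff[of y q] gen_fun_extinction_prob y extinction_prob_less_1 by simp
    also have "\<dots> \<le> (q - y) * \<gamma>"
      using y extinction_prob_less_1 by (intro mult_left_mono gen_fun_slope_mono) auto
    also have "\<dots> \<le> \<gamma> ^ n * q * \<gamma>"
      using Suc y extinction_prob_nonneg extinction_prob_less_1
      by (intro mult_right_mono) (auto simp: y_def intro!: gen_fun_slope_nonneg)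
    finally show ?case
      by (simp add: y_def mult_ac)
  qed simp
  also have "\<dots> \<le> \<gamma> ^ n"
    using extinction_prob_nonneg extinction_prob_less_1
    by (intro mult_left_le) (auto intro!: zero_le_power gen_fun_slope_nonneg)
  finally show ?thesis .
qed

lemma funpow_gen_fun_between:
  assumes "q \<le> t" "t \<le> 1"
  shows "q \<le> (gen_fun p ^^ k) t \<and> (gen_fun p ^^ k) t \<le> t"
proof (induction k)
  case (Suc k)
  then show ?case
    using assms extinction_prob_le_gen_fun[of "(gen_fun p ^^ k) t"] gen_fun_le_self[of "(gen_fun p ^^ k) t"]
    by auto
qed (use assms in simp)

lemma gen_fun_contracts_to_extinction_prob:
  assumes "q \<le> x" "x \<le> r" "q < r" "r \<le> 1"
  shows "gen_fun p x - q \<le> (x - q) * gen_fun_slope p q r"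
    and "gen_fun p x - q \<le> (x - q) * (\<gamma> + (x - q) * ((gen_fun_slope p q r - \<gamma>) / (r - q)))"
proof -
  have diff: "gen_fun p x - q = (x - q) * gen_fun_slope p q x"
    using gen_fun_diff[of q x] gen_fun_extinction_prob extinction_prob_nonneg assms by simp
  show "gen_fun p x - q \<le> (x - q) * gen_fun_slope p q r"
    unfolding diff using extinction_prob_nonneg assms by (intro mult_left_mono gen_fun_slope_mono) auto
  show "gen_fun p x - q \<le> (x - q) * (\<gamma> + (x - q) * ((gen_fun_slope p q r - \<gamma>) / (r - q)))"
    unfolding diff using gen_fun_slope_le_chord[of q x r] extinction_prob_nonneg assms
    by (intro mult_left_mono) auto
qed

text \<open>The distance to \<open>q\<close> shrinks at least by the factor \<open>\<theta> < 1\<close> per step, and the actual factor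
  exceeds \<open>\<gamma>\<close> by at most a multiple of that distance; the product of these factors is therefore
  \<open>O(\<gamma> ^ k)\<close>.\<close>

lemma funpow_gen_fun_converges_geometrically:
  assumes "0 < \<gamma>" and r: "q < r" "r < 1" "gen_fun p r < r"
  obtains A where "1 \<le> A" "\<And>t k. q \<le> t \<Longrightarrow> t \<le> r \<Longrightarrow> (gen_fun p ^^ k) t - q \<le> A * \<gamma> ^ k"
proof -
  define \<theta> where "\<theta> = gen_fun_slope p q r"
  define L where "L = (\<theta> - \<gamma>) / (r - q)"
  have q: "0 \<le> q" "gen_fun p q = q"
    using extinction_prob_nonneg gen_fun_extinction_prob by auto
  have "gen_fun p r - q = (r - q) * \<theta>"
    using gen_fun_diff[of q r] q r by (simp add: \<theta>_def)
  then have \<theta>_less_1: "\<theta> < 1"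
    using r by (smt (verit) mult_less_cancel_left2)
  have \<gamma>_le_\<theta>: "\<gamma> \<le> \<theta>"
    unfolding \<theta>_def using q r by (intro gen_fun_slope_mono) auto
  have L: "0 \<le> L"
    unfolding L_def using \<gamma>_le_\<theta> r by simp
  have step: "gen_fun p x - q \<le> (x - q) * (\<gamma> * exp (L / \<gamma> * (x - q)))" if x: "q \<le> x" "x \<le> r" for x
  proof -
    have "\<gamma> + (x - q) * L = \<gamma> * (1 + L / \<gamma> * (x - q))"
      using \<open>0 < \<gamma>\<close> by (simp add: field_simps)
    also have "\<dots> \<le> \<gamma> * exp (L / \<gamma> * (x - q))"
      using \<open>0 < \<gamma>\<close> by (intro mult_left_mono) (auto simp: exp_ge_add_one_self)
    finally have factor: "\<gamma> + (x - q) * L \<le> \<gamma> * exp (L / \<gamma> * (x - q))" .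
    have "gen_fun p x - q \<le> (x - q) * (\<gamma> + (x - q) * L)"
      using gen_fun_contracts_to_extinction_prob(2)[OF x r(1) less_imp_le[OF r(2)]]
      by (simp add: L_def \<theta>_def)
    also have "\<dots> \<le> (x - q) * (\<gamma> * exp (L / \<gamma> * (x - q)))"
      using factor x by (intro mult_left_mono) auto
    finally show ?thesis .
  qed
  show ?thesis
  proof
    show "1 \<le> exp (L / \<gamma> / (1 - \<theta>))"
      using L \<open>0 < \<gamma>\<close> \<theta>_less_1 by simp
    fix t k
    assume t: "q \<le> t" "t \<le> r"
    define x where "x k = (gen_fun p ^^ k) t" for k
    have x: "q \<le> x k" "x k \<le> r" for k
      using funpow_gen_fun_between[of t k] t r by (auto simp: x_def)
    have x_Suc: "x (Suc k) = gen_fun p (x k)" for k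
      by (simp add: x_def)
    have contract: "x k - q \<le> \<theta> ^ k" for k
    proof (induction k)
      case (Suc k)
      have "x (Suc k) - q \<le> (x k - q) * \<theta>"
        unfolding x_Suc \<theta>_def using gen_fun_contracts_to_extinction_prob(1) x r by simp
      also have "\<dots> \<le> \<theta> ^ k * \<theta>"
        using Suc \<gamma>_le_\<theta> \<open>0 < \<gamma>\<close> by (intro mult_right_mono) auto
      finally show ?case
        by (simp add: mult.commute)
    qed (use t r q in \<open>simp add: x_def\<close>)
    have refined: "x k - q \<le> \<gamma> ^ k * exp (L / \<gamma> * (\<Sum>i<k. \<theta> ^ i))" for k
    proof (induction k)
      case (Suc k)
      have "x (Suc k) - q \<le> (x k - q) * (\<gamma> * exp (L / \<gamma> * (x k - q)))"
        unfolding x_Suc using step x by blast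
      also have "\<dots> \<le> (\<gamma> ^ k * exp (L / \<gamma> * (\<Sum>i<k. \<theta> ^ i))) * (\<gamma> * exp (L / \<gamma> * \<theta> ^ k))"
        using Suc contract[of k] x[of k] L \<open>0 < \<gamma>\<close>
        by (intro mult_mono) (auto intro!: divide_right_mono mult_left_mono)
      also have "\<dots> = \<gamma> ^ Suc k * exp (L / \<gamma> * (\<Sum>i<Suc k. \<theta> ^ i))"
        by (simp add: distrib_left mult_ac flip: exp_add)
      finally show ?case .
    qed (use t r q in \<open>simp add: x_def\<close>)
    have "(\<Sum>i<k. \<theta> ^ i) \<le> 1 / (1 - \<theta>)"
      using \<theta>_less_1 \<gamma>_le_\<theta> \<open>0 < \<gamma>\<close>
      by (simp add: sum_gp_strict field_simps mult_left_le_one_le)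
    then have "L / \<gamma> * (\<Sum>i<k. \<theta> ^ i) \<le> L / \<gamma> * (1 / (1 - \<theta>))"
      using L \<open>0 < \<gamma>\<close> by (intro mult_left_mono) auto
    then have "exp (L / \<gamma> * (\<Sum>i<k. \<theta> ^ i)) \<le> exp (L / \<gamma> / (1 - \<theta>))"
      by simp
    then show "(gen_fun p ^^ k) t - q \<le> exp (L / \<gamma> / (1 - \<theta>)) * \<gamma> ^ k"
      using refined[of k] \<open>0 < \<gamma>\<close> by (simp add: x_def mult.commute order_trans)
  qed
qed

lemma funpow_gen_fun_minus_extinction_prob_le_shifted:
  assumes "0 < \<gamma>" "1 \<le> A"
    and converges: "\<And>t k. q \<le> t \<Longrightarrow> t \<le> r \<Longrightarrow> (gen_fun p ^^ k) t - q \<le> A * \<gamma> ^ k"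
    and s: "0 \<le> s" "s \<le> 1" and j: "q \<le> (gen_fun p ^^ j) s" "(gen_fun p ^^ j) s \<le> r"
  shows "(gen_fun p ^^ n) s - q \<le> A * \<gamma> ^ n / \<gamma> ^ j"
proof (cases "j \<le> n")
  case True
  then have "(gen_fun p ^^ n) s = (gen_fun p ^^ (n - j)) ((gen_fun p ^^ j) s)"
    by (metis funpow_add le_add_diff_inverse2 comp_apply)
  then have "(gen_fun p ^^ n) s - q \<le> A * \<gamma> ^ (n - j)"
    using converges[OF j] by simp
  then show ?thesis
    using True \<open>0 < \<gamma>\<close> by (simp add: power_diff)
next
  case False
  have "(gen_fun p ^^ n) s - q \<le> 1"
    using funpow_gen_fun_le_1[OF s] extinction_prob_nonneg by (smt (verit))
  also have "\<dots> \<le> \<gamma> ^ n / \<gamma> ^ j"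
    using False \<open>0 < \<gamma>\<close> slope_at_extinction_prob_le_1 by (simp add: power_decreasing)
  also have "\<dots> \<le> A * \<gamma> ^ n / \<gamma> ^ j"
    using \<open>1 \<le> A\<close> \<open>0 < \<gamma>\<close> mult_right_mono[of 1 A "\<gamma> ^ n / \<gamma> ^ j"] by simp
  finally show ?thesis .
qed

end

section \<open>Escape from a neighbourhood of 1\<close>

lemma one_minus_power_le:
  fixes v :: real
  assumes "0 \<le> v" "v \<le> 1"
  shows "(1 - v) ^ k \<le> 1 - real k * v + (real k * v)\<^sup>2"
proof (induction k)
  case (Suc k)
  have "(1 - v) ^ Suc k \<le> (1 - v) * (1 - real k * v + (real k * v)\<^sup>2)"
    using assms Suc by (simp add: mult_left_mono)
  also have "\<dots> \<le> 1 - real (Suc k) * v + (real (Suc k) * v)\<^sup>2"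
  proof -
    have "0 \<le> (real k)\<^sup>2 * v ^ 3" "0 \<le> (real k + 1) * v\<^sup>2"
      using assms by simp_all
    then show ?thesis
      by (simp add: power2_eq_square power3_eq_cube algebra_simps)
  qed
  finally show ?case .
qed simp

lemma exp_minus_two_mult_le:
  fixes e :: real
  assumes "0 \<le> e" "e \<le> 1 / 2"
  shows "exp (- 2 * e) \<le> 1 - e"
proof -
  have "exp (- 2 * e) \<le> 1 / (1 + 2 * e)"
    using exp_ge_add_one_self[of "2 * e"] assms by (simp add: exp_minus field_simps)
  also have "\<dots> \<le> 1 - e"
  proof -
    have "0 \<le> e * (1 - 2 * e)"
      using assms by simp
    then have "1 \<le> (1 - e) * (1 + 2 * e)"
      by (simp add: algebra_simps)
    then show ?thesis
      using assms by (simp add: pos_divide_le_eq)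
  qed
  finally show ?thesis .
qed

lemma min_1_le_ln_ratio:
  fixes \<rho> a :: real
  assumes \<rho>: "1 < \<rho>" and a: "0 \<le> a"
  shows "min 1 a \<le> 2 * \<rho> / (\<rho> - 1) * (ln (1 + a) - ln (1 + a / \<rho>))"
proof -
  define c where "c = 2 * \<rho> / (\<rho> - 1)"
  have pos: "0 < 1 + a / \<rho>" "0 < 1 + a"
    using a \<rho> by (auto intro: add_pos_nonneg)
  have "1 - (1 + a / \<rho>) / (1 + a) \<le> ln ((1 + a) / (1 + a / \<rho>))"
    using ln_le_minus_one[of "(1 + a / \<rho>) / (1 + a)"] pos by (simp add: ln_div)
  moreover have "c * (1 - (1 + a / \<rho>) / (1 + a)) = 2 * a / (1 + a)"
  proof -
    have "1 - (1 + a / \<rho>) / (1 + a) = ((1 + a) - (1 + a / \<rho>)) / (1 + a)"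
      by (simp only: diff_divide_distrib) (use pos in simp)
    moreover have "c * ((1 + a) - (1 + a / \<rho>)) = 2 * a"
      using \<rho> by (simp add: c_def field_simps)
    ultimately show ?thesis
      by (metis times_divide_eq_right)
  qed
  moreover have "min 1 a \<le> 2 * a / (1 + a)"
    using a by (auto simp: field_simps min_def mult_left_le_one_le)
  moreover have "0 \<le> c"
    using \<rho> by (simp add: c_def)
  ultimately show ?thesis
    using pos by (smt (verit) c_def ln_div mult_left_mono)
qed

lemma sum_min_geometric_le_ln:
  fixes \<rho> a :: real
  assumes \<rho>: "1 < \<rho>" and a: "0 \<le> a"
  shows "(\<Sum>l<J. min 1 (a * (1 / \<rho>) ^ l)) \<le> 2 * \<rho> / (\<rho> - 1) * ln (1 + a)"
  using a
proof (induction J arbitrary: a)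
  case (Suc J)
  have "(\<Sum>l<Suc J. min 1 (a * (1 / \<rho>) ^ l)) = min 1 a + (\<Sum>l<J. min 1 (a / \<rho> * (1 / \<rho>) ^ l))"
    by (subst sum.lessThan_Suc_shift) (simp add: field_simps)
  also have "\<dots> \<le> min 1 a + 2 * \<rho> / (\<rho> - 1) * ln (1 + a / \<rho>)"
    using Suc.IH[of "a / \<rho>"] Suc.prems \<rho> by simp
  also have "\<dots> \<le> 2 * \<rho> / (\<rho> - 1) * ln (1 + a)"
    using min_1_le_ln_ratio[OF \<rho> Suc.prems] by (simp add: algebra_simps)
  finally show ?case .
qed (use \<rho> in simp)

definition truncated_moment :: "nat pmf \<Rightarrow> real \<Rightarrow> real" where
  "truncated_moment p v = (\<Sum>k. pmf p k * real k * min 1 (real k * v))"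

context finite_mean_offspring
begin

lemma summable_truncated_moment:
  assumes "0 \<le> v"
  shows "summable (\<lambda>k. pmf p k * real k * min 1 (real k * v))"
proof (rule summable_comparison_test[OF _ summable_mean], intro exI allI impI)
  fix k :: nat
  show "norm (pmf p k * real k * min 1 (real k * v)) \<le> pmf p k * real k"
    using assms by (simp add: mult_left_le)
qed

lemma truncated_moment_nonneg: "0 \<le> v \<Longrightarrow> 0 \<le> truncated_moment p v"
  unfolding truncated_moment_def by (rule suminf_nonneg[OF summable_truncated_moment]) auto

lemma truncated_moment_mono: "0 \<le> v \<Longrightarrow> v \<le> w \<Longrightarrow> truncated_moment p v \<le> truncated_moment p w"
  unfolding truncated_moment_def
  by (rule suminf_le[OF _ summable_truncated_moment summable_truncated_moment])
     (auto intro!: mult_left_mono min.mono)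

lemma one_minus_gen_fun_ge_mean:
  assumes "0 \<le> v" "v \<le> 1"
  shows "offspring_mean p * v - v * truncated_moment p v \<le> 1 - gen_fun p (1 - v)"
proof -
  have summable_power: "summable (\<lambda>k. pmf p k * (1 - v) ^ k)"
    using assms by (intro summable_pmf_times_power) auto
  have "offspring_mean p * v = (\<Sum>k. pmf p k * real k * v)"
    unfolding offspring_mean_def by (rule suminf_mult2[OF summable_mean])
  moreover have "v * truncated_moment p v = (\<Sum>k. v * (pmf p k * real k * min 1 (real k * v)))"
    unfolding truncated_moment_def by (rule suminf_mult[symmetric, OF summable_truncated_moment[OF assms(1)]])
  ultimately have "offspring_mean p * v - v * truncated_moment p v
      = (\<Sum>k. pmf p k * real k * v - v * (pmf p k * real k * min 1 (real k * v)))"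
    by (simp add: suminf_diff summable_mult summable_mult2 summable_mean summable_truncated_moment assms)
  also have "\<dots> \<le> (\<Sum>k. pmf p k - pmf p k * (1 - v) ^ k)"
  proof (rule suminf_le)
    fix k
    have key: "real k * v - real k * v * min 1 (real k * v) \<le> 1 - (1 - v) ^ k"
    proof (cases "real k * v \<le> 1")
      case True
      then show ?thesis
        using one_minus_power_le[OF assms, of k] by (simp add: power2_eq_square)
    next
      case False
      then show ?thesis
        using assms by (simp add: power_le_one)
    qed
    then show "pmf p k * real k * v - v * (pmf p k * real k * min 1 (real k * v))
        \<le> pmf p k - pmf p k * (1 - v) ^ k"
      using mult_left_mono[OF key pmf_nonneg[of p k]] by (simp add: algebra_simps)
  qed (auto intro!: summable_diff summable_mult summable_mult2 summable_mean summable_truncated_moment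
      summable_pmf_nat summable_power assms)
  also have "\<dots> = 1 - gen_fun p (1 - v)"
    unfolding gen_fun_def by (simp add: suminf_diff[OF summable_pmf_nat summable_power, symmetric] suminf_pmf_nat)
  finally show ?thesis .
qed

lemma one_minus_gen_fun_ge_slope:
  assumes "0 \<le> r" "r \<le> w" "w \<le> 1"
  shows "gen_fun_slope p r 1 * (1 - w) \<le> 1 - gen_fun p w"
proof -
  have "1 - gen_fun p w = (1 - w) * gen_fun_slope p w 1"
    using gen_fun_diff[of w 1] assms by simp
  moreover have "gen_fun_slope p r 1 \<le> gen_fun_slope p w 1"
    using assms by (intro gen_fun_slope_mono) auto
  ultimately show ?thesis
    using assms by (simp add: mult.commute mult_left_mono)
qed

lemma gen_fun_slope_gt_1:
  assumes "0 \<le> r" "r < 1" "gen_fun p r < r"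
  shows "1 < gen_fun_slope p r 1"
proof -
  have "1 - gen_fun p r = (1 - r) * gen_fun_slope p r 1"
    using gen_fun_diff[of r 1] assms by simp
  show ?thesis
  proof (rule ccontr)
    assume "\<not> 1 < gen_fun_slope p r 1"
    then have "(1 - r) * gen_fun_slope p r 1 \<le> (1 - r) * 1"
      using assms by (intro mult_left_mono) auto
    then show False
      using \<open>1 - gen_fun p r = (1 - r) * gen_fun_slope p r 1\<close> assms by (smt (verit) mult.right_neutral)
  qed
qed

end

context supercritical_offspring
begin

text \<open>Near \<open>1\<close> the generating function is \<open>1 - m v + O(v \<cdot> truncated_moment p v)\<close>; the factor
  \<open>exp (- K \<cdot> truncated_moment p v)\<close> absorbs the error, and when the error is not small the
  trivial bound \<open>v \<le> 1 - gen_fun p (1 - v)\<close> takes over.\<close>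

lemma one_minus_gen_fun_ge_exp:
  defines "K \<equiv> 2 * (1 + ln (offspring_mean p)) / offspring_mean p"
  assumes v: "0 \<le> v" "v \<le> 1" and below_diag: "gen_fun p (1 - v) \<le> 1 - v"
  shows "offspring_mean p * v * exp (- K * truncated_moment p v) \<le> 1 - gen_fun p (1 - v)"
proof -
  define m where "m = offspring_mean p"
  define e where "e = truncated_moment p v / m"
  have m: "1 < m" "0 < ln m"
    using mean_gt_1 by (simp_all add: m_def)
  have e: "0 \<le> e"
    using truncated_moment_nonneg[OF v(1)] m by (simp add: e_def)
  have K: "K * truncated_moment p v = 2 * (1 + ln m) * e"
    using m by (simp add: K_def e_def m_def)
  show ?thesis
  proof (cases "e \<le> 1 / 2")
    case True
    have "exp (- K * truncated_moment p v) \<le> exp (- 2 * e)"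
      using K m e by (simp add: mult_left_mono algebra_simps)
    also have "\<dots> \<le> 1 - e"
      using exp_minus_two_mult_le[OF e True] .
    finally have "m * v * exp (- K * truncated_moment p v) \<le> m * v * (1 - e)"
      using m v by (intro mult_left_mono) auto
    also have "\<dots> = m * v - v * truncated_moment p v"
      using m by (simp add: e_def field_simps)
    also have "\<dots> \<le> 1 - gen_fun p (1 - v)"
      using one_minus_gen_fun_ge_mean[OF v] by (simp add: m_def)
    finally show ?thesis
      by (simp add: m_def)
  next
    case False
    then have "2 * (1 + ln m) * (1 / 2) \<le> 2 * (1 + ln m) * e"
      using m by (intro mult_left_mono) auto
    then have "1 + ln m \<le> K * truncated_moment p v"
      using K by simp
    then have "m * exp (- K * truncated_moment p v) \<le> m * exp (- (1 + ln m))"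
      using m by (intro mult_left_mono) auto
    also have "\<dots> \<le> 1"
      using m by (simp add: exp_diff exp_minus field_simps)
    finally have "v * (m * exp (- K * truncated_moment p v)) \<le> v * 1"
      using v by (intro mult_left_mono) auto
    then have "m * v * exp (- K * truncated_moment p v) \<le> v"
      by (simp add: mult_ac)
    then show ?thesis
      using below_diag by (simp add: m_def)
  qed
qed

lemma exists_funpow_gen_fun_le:
  assumes r: "q < r" "r < 1" "gen_fun p r < r" and s: "0 \<le> s" "s < 1"
  shows "\<exists>i. (gen_fun p ^^ i) s \<le> r"
proof (rule ccontr)
  assume "\<not> ?thesis"
  then have above: "r < (gen_fun p ^^ i) s" for i
    by (simp add: not_le)
  define \<rho> where "\<rho> = gen_fun_slope p r 1"
  define u where "u i = 1 - (gen_fun p ^^ i) s" for i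
  have r_nonneg: "0 \<le> r"
    using r extinction_prob_nonneg by simp
  have \<rho>: "1 < \<rho>"
    unfolding \<rho>_def using r r_nonneg by (intro gen_fun_slope_gt_1) auto
  have "\<rho> ^ i * u 0 \<le> u i" for i
  proof (induction i)
    case (Suc i)
    have "(gen_fun p ^^ i) s \<le> s"
      using funpow_gen_fun_between[of s i] above[of 0] r s by simp
    then have "\<rho> * u i \<le> u (Suc i)"
      unfolding \<rho>_def u_def using one_minus_gen_fun_ge_slope[OF r_nonneg, of "(gen_fun p ^^ i) s"] above[of i] s
      by simp
    then show ?case
      using Suc \<rho> by (smt (verit) mult.assoc mult_left_mono power_Suc)
  qed simp
  moreover obtain i where "1 / u 0 < \<rho> ^ i"
    using real_arch_pow[OF \<rho>] by blast
  moreover have "u i \<le> 1" "0 < u 0"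
    using funpow_gen_fun_nonneg[of s i p] s by (simp_all add: u_def)
  ultimately show False
    by (smt (verit) divide_less_eq)
qed

lemma one_minus_funpow_gen_fun_le_geometric:
  assumes r: "q \<le> r" and s: "s < 1" and above: "\<And>i. i \<le> N \<Longrightarrow> r < (gen_fun p ^^ i) s"
    and "i \<le> N"
  shows "1 - (gen_fun p ^^ i) s \<le> (1 / gen_fun_slope p r 1) ^ (N - i)"
proof -
  define \<rho> where "\<rho> = gen_fun_slope p r 1"
  define u where "u i = 1 - (gen_fun p ^^ i) s" for i
  have r_nonneg: "0 \<le> r" and s_ge: "q \<le> s"
    using r extinction_prob_nonneg above[of 0] by auto
  have below_1: "(gen_fun p ^^ i) s < 1" for i
    using funpow_gen_fun_between[OF s_ge, of i] s by simp
  have "1 \<le> \<rho>"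
    unfolding \<rho>_def using gen_fun_slope_mono[of q r 1 1] gen_fun_slope_extinction_prob_1
      extinction_prob_nonneg r s s_ge above[of 0]
    by simp
  then have \<rho>_pos: "0 < \<rho>"
    by simp
  have "u (N - d) \<le> (1 / \<rho>) ^ d" if "d \<le> N" for d
    using that
  proof (induction d)
    case 0
    show ?case
      using funpow_gen_fun_nonneg[of s] r_nonneg above[of 0] s by (simp add: u_def)
  next
    case (Suc d)
    define i where "i = N - Suc d"
    have "\<rho> * u i \<le> u (Suc i)"
      unfolding \<rho>_def u_def
      using one_minus_gen_fun_ge_slope[OF r_nonneg, of "(gen_fun p ^^ i) s"] above[of i] below_1[of i] Suc.prems
      by (simp add: i_def)
    also have "u (Suc i) \<le> (1 / \<rho>) ^ d"
      using Suc by (simp add: i_def Suc_diff_Suc)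
    finally show ?case
      using \<rho>_pos by (simp add: i_def field_simps)
  qed
  from this[of "N - i"] show ?thesis
    using \<open>i \<le> N\<close> by (simp add: u_def \<rho>_def)
qed

lemma one_minus_funpow_gen_fun_ge_exp:
  defines "K \<equiv> 2 * (1 + ln (offspring_mean p)) / offspring_mean p"
  assumes s: "q \<le> s" "s < 1"
  shows "offspring_mean p ^ N * (1 - s) * exp (- K * (\<Sum>l<N. truncated_moment p (1 - (gen_fun p ^^ l) s)))
    \<le> 1 - (gen_fun p ^^ N) s"
proof (induction N)
  case (Suc N)
  define x where "x = (gen_fun p ^^ N) s"
  have x: "q \<le> x" "x \<le> s"
    using funpow_gen_fun_between[of s N] s by (simp_all add: x_def)
  have "offspring_mean p ^ Suc N * (1 - s) * exp (- K * (\<Sum>l<Suc N. truncated_moment p (1 - (gen_fun p ^^ l) s)))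
      = offspring_mean p * (offspring_mean p ^ N * (1 - s)
          * exp (- K * (\<Sum>l<N. truncated_moment p (1 - (gen_fun p ^^ l) s))))
        * exp (- K * truncated_moment p (1 - x))"
    by (simp add: x_def algebra_simps flip: exp_add)
  also have "\<dots> \<le> offspring_mean p * (1 - x) * exp (- K * truncated_moment p (1 - x))"
    using Suc mean_gt_1 by (simp add: x_def)
  also have "\<dots> \<le> 1 - gen_fun p x"
    using one_minus_gen_fun_ge_exp[of "1 - x"] gen_fun_le_self[of x] x s extinction_prob_nonneg
    by (simp add: K_def)
  finally show ?case
    by (simp add: x_def)
qed simp

end

locale llogl_offspring = supercritical_offspring +
  assumes summable_llogl: "summable (\<lambda>k. pmf p k * (real k * ln (real k)))"
begin

lemma summable_mean_times_ln: "summable (\<lambda>k. pmf p k * real k * ln (1 + real k))"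
proof (rule summable_comparison_test)
  show "summable (\<lambda>k. ln 2 * (pmf p k * real k) + pmf p k * (real k * ln (real k)))"
    by (intro summable_mult summable_add summable_mean summable_llogl)
  have "norm (pmf p k * real k * ln (1 + real k))
      \<le> ln 2 * (pmf p k * real k) + pmf p k * (real k * ln (real k))" if "k \<ge> 1" for k
  proof -
    have "ln (1 + real k) \<le> ln (2 * real k)"
      using that by (subst ln_le_cancel_iff) auto
    also have "\<dots> = ln 2 + ln (real k)"
      using that by (simp add: ln_mult)
    finally have "pmf p k * real k * ln (1 + real k) \<le> pmf p k * real k * (ln 2 + ln (real k))"
      by (intro mult_left_mono) auto
    then show ?thesis
      by (simp add: algebra_simps)
  qed
  then show "\<exists>N. \<forall>k\<ge>N. norm (pmf p k * real k * ln (1 + real k))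
      \<le> ln 2 * (pmf p k * real k) + pmf p k * (real k * ln (real k))"
    by blast
qed

lemma bounded_sums_truncated_moment:
  assumes \<rho>: "1 < \<rho>"
  obtains S where "\<And>J. (\<Sum>l<J. truncated_moment p ((1 / \<rho>) ^ l)) \<le> S"
proof -
  define c where "c = 2 * \<rho> / (\<rho> - 1)"
  have summable_ln: "summable (\<lambda>k. pmf p k * real k * (c * ln (1 + real k)))"
    using summable_mult[OF summable_mean_times_ln, of c] by (simp add: mult_ac)
  show ?thesis
  proof
    fix J
    have nonneg: "0 \<le> (1 / \<rho>) ^ l" for l
      using \<rho> by simp
    have "(\<Sum>l<J. truncated_moment p ((1 / \<rho>) ^ l))
        = (\<Sum>k. \<Sum>l<J. pmf p k * real k * min 1 (real k * (1 / \<rho>) ^ l))"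
      unfolding truncated_moment_def
      by (rule suminf_sum[symmetric]) (rule summable_truncated_moment[OF nonneg])
    also have "\<dots> \<le> (\<Sum>k. pmf p k * real k * (c * ln (1 + real k)))"
    proof (rule suminf_le[OF _ summable_sum summable_ln])
      fix k
      show "(\<Sum>l<J. pmf p k * real k * min 1 (real k * (1 / \<rho>) ^ l))
          \<le> pmf p k * real k * (c * ln (1 + real k))"
        unfolding c_def sum_distrib_left[symmetric]
        using \<rho> by (intro mult_left_mono sum_min_geometric_le_ln) auto
    qed (rule summable_truncated_moment[OF nonneg])
    finally show "(\<Sum>l<J. truncated_moment p ((1 / \<rho>) ^ l)) \<le> (\<Sum>k. pmf p k * real k * (c * ln (1 + real k)))" .
  qed
qed

text \<open>While the orbit of \<open>s\<close> stays above \<open>r\<close>, its distance to \<open>1\<close> grows at least by the factor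
  \<open>\<rho> > 1\<close> per step, so the truncated moments along the orbit are dominated by those at the
  points \<open>\<rho>^(-l)\<close>, whose sum is bounded.\<close>

lemma escape_time_bound:
  assumes r: "q < r" "r < 1" "gen_fun p r < r"
  obtains C where
    "\<And>s N. s < 1 \<Longrightarrow> (\<And>i. i \<le> N \<Longrightarrow> r < (gen_fun p ^^ i) s) \<Longrightarrow> offspring_mean p ^ N * (1 - s) \<le> C"
proof -
  define K where "K = 2 * (1 + ln (offspring_mean p)) / offspring_mean p"
  define \<rho> where "\<rho> = gen_fun_slope p r 1"
  have K: "0 \<le> K"
    using mean_gt_1 by (simp add: K_def)
  have \<rho>: "1 < \<rho>"
    unfolding \<rho>_def using r extinction_prob_nonneg by (intro gen_fun_slope_gt_1) auto
  obtain S where S: "\<And>J. (\<Sum>l<J. truncated_moment p ((1 / \<rho>) ^ l)) \<le> S"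
    using bounded_sums_truncated_moment[OF \<rho>] by blast
  show ?thesis
  proof
    fix s N
    assume s: "s < 1" and above: "\<And>i. i \<le> N \<Longrightarrow> r < (gen_fun p ^^ i) s"
    have s_ge: "q \<le> s"
      using above[of 0] r by simp
    have "(\<Sum>l<N. truncated_moment p (1 - (gen_fun p ^^ l) s))
        \<le> (\<Sum>l<N. truncated_moment p ((1 / \<rho>) ^ Suc (N - Suc l)))"
    proof (rule sum_mono)
      fix l
      assume "l \<in> {..<N}"
      then show "truncated_moment p (1 - (gen_fun p ^^ l) s) \<le> truncated_moment p ((1 / \<rho>) ^ Suc (N - Suc l))"
        using one_minus_funpow_gen_fun_le_geometric[of r s N l] funpow_gen_fun_between[OF s_ge, of l]
          r s above
        by (intro truncated_moment_mono) (auto simp: \<rho>_def Suc_diff_Suc)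
    qed
    also have "\<dots> = (\<Sum>d<N. truncated_moment p ((1 / \<rho>) ^ Suc d))"
      by (rule sum.nat_diff_reindex)
    also have "\<dots> \<le> (\<Sum>d<Suc N. truncated_moment p ((1 / \<rho>) ^ d))"
      using truncated_moment_nonneg[of 1] by (subst sum.lessThan_Suc_shift) simp
    also have "\<dots> \<le> S"
      by (rule S)
    finally have "exp (- K * S) \<le> exp (- K * (\<Sum>l<N. truncated_moment p (1 - (gen_fun p ^^ l) s)))"
      using K by (simp add: mult_left_mono)
    then have "offspring_mean p ^ N * (1 - s) * exp (- K * S) \<le> 1 - (gen_fun p ^^ N) s"
      using one_minus_funpow_gen_fun_ge_exp[OF s_ge s, of N] mean_gt_1 s
      by (smt (verit) K_def mult_left_mono zero_le_power mult_nonneg_nonneg)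
    also have "\<dots> \<le> 1"
      using funpow_gen_fun_nonneg[of s] s_ge extinction_prob_nonneg s by simp
    finally show "offspring_mean p ^ N * (1 - s) \<le> exp (K * S)"
      by (simp add: exp_minus field_simps)
  qed
qed

lemma exists_escape_time:
  assumes r: "q < r" "r < 1" "gen_fun p r < r"
  obtains B where "\<And>s. q \<le> s \<Longrightarrow> s < 1 \<Longrightarrow>
    \<exists>j. q \<le> (gen_fun p ^^ j) s \<and> (gen_fun p ^^ j) s \<le> r \<and> offspring_mean p ^ j \<le> B / (1 - s)"
proof -
  obtain C where C: "\<And>s N. s < 1 \<Longrightarrow> (\<And>i. i \<le> N \<Longrightarrow> r < (gen_fun p ^^ i) s)
      \<Longrightarrow> offspring_mean p ^ N * (1 - s) \<le> C"
    using escape_time_bound[OF r] by blast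
  show ?thesis
  proof
    fix s
    assume s: "q \<le> s" "s < 1"
    define j where "j = (LEAST j. (gen_fun p ^^ j) s \<le> r)"
    have j: "(gen_fun p ^^ j) s \<le> r"
      unfolding j_def
      by (rule LeastI_ex) (use exists_funpow_gen_fun_le[OF r, of s] s extinction_prob_nonneg in auto)
    have before_j: "r < (gen_fun p ^^ i) s" if "i < j" for i
      using not_less_Least[OF that[unfolded j_def]] unfolding j_def by simp
    have "offspring_mean p ^ j \<le> max 1 (offspring_mean p * C) / (1 - s)"
    proof (cases j)
      case 0
      then show ?thesis
        using s extinction_prob_nonneg by (simp add: le_divide_eq)
    next
      case (Suc N)
      then have "offspring_mean p ^ N * (1 - s) \<le> C"
        using C[OF s(2)] before_j by simp
      then have "offspring_mean p ^ j * (1 - s) \<le> offspring_mean p * C"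
        using Suc mean_gt_1 by (simp add: mult.assoc mult_left_mono)
      then show ?thesis
        using s by (simp add: le_divide_eq)
    qed
    then show "\<exists>j. q \<le> (gen_fun p ^^ j) s \<and> (gen_fun p ^^ j) s \<le> r
        \<and> offspring_mean p ^ j \<le> max 1 (offspring_mean p * C) / (1 - s)"
      using j funpow_gen_fun_between[of s j] s by auto
  qed
qed

end

section \<open>Small values of the Galton--Watson process\<close>

lemma sum_pmf_le_gen_fun:
  fixes \<mu> :: "nat pmf"
  assumes x: "1 \<le> x"
  shows "(\<Sum>k\<in>{k. 1 \<le> k \<and> real k \<le> x}. pmf \<mu> k) \<le> 2 * (gen_fun \<mu> (1 - 1 / (2 * x)) - pmf \<mu> 0)"
proof -
  define K where "K = {k. 1 \<le> k \<and> real k \<le> x}"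
  define s where "s = 1 - 1 / (2 * x)"
  have s: "0 \<le> s" "s \<le> 1"
    using x by (auto simp: s_def field_simps)
  have K: "finite K" "0 \<notin> K"
    by (rule finite_subset[of _ "{..nat \<lceil>x\<rceil>}"]) (auto simp: K_def le_nat_iff le_ceiling_iff)
  have "1 / 2 \<le> s ^ k" if "k \<in> K" for k
  proof -
    have "1 / 2 \<le> 1 + real k * (- (1 / (2 * x)))"
      using that x by (simp add: K_def field_simps)
    also have "\<dots> \<le> s ^ k"
      unfolding s_def using Bernoulli_inequality[of "- (1 / (2 * x))" k] x by (simp add: field_simps)
    finally show ?thesis .
  qed
  then have "(\<Sum>k\<in>K. pmf \<mu> k) \<le> (\<Sum>k\<in>K. 2 * (pmf \<mu> k * s ^ k))"
    using mult_left_mono[of 1 "2 * s ^ _" "pmf \<mu> _"] by (intro sum_mono) (auto simp: mult_ac)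
  also have "\<dots> = 2 * ((\<Sum>k\<in>insert 0 K. pmf \<mu> k * s ^ k) - pmf \<mu> 0)"
    using K by (simp add: sum_distrib_left)
  also have "\<dots> \<le> 2 * (gen_fun \<mu> s - pmf \<mu> 0)"
    unfolding gen_fun_def using K s
    by (intro mult_left_mono diff_right_mono sum_le_suminf summable_pmf_times_power) auto
  finally show ?thesis
    by (simp add: K_def s_def)
qed

locale schroeder_offspring = llogl_offspring +
  assumes schroeder: "pmf p 0 + pmf p 1 > 0"
begin

abbreviation \<alpha> :: real where "\<alpha> \<equiv> schroeder_alpha p"

lemma slope_at_extinction_prob_eq_powr: "\<gamma> = offspring_mean p powr (- \<alpha>)"
  and schroeder_alpha_nonneg: "0 \<le> \<alpha>"
proof -
  have \<gamma>: "0 < \<gamma>" "\<gamma> \<le> 1"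
    using slope_at_extinction_prob_pos[OF schroeder] slope_at_extinction_prob_le_1 by auto
  have ln_m: "0 < ln (offspring_mean p)"
    using mean_gt_1 by simp
  have \<alpha>: "\<alpha> = - ln \<gamma> / ln (offspring_mean p)"
    unfolding schroeder_alpha_def gen_fun_deriv_eq_slope ..
  show "\<gamma> = offspring_mean p powr (- \<alpha>)"
    using \<gamma> ln_m mean_gt_1 by (simp add: \<alpha> powr_def)
  show "0 \<le> \<alpha>"
    using \<gamma> ln_m by (simp add: \<alpha> divide_nonpos_pos)
qed

lemma slope_at_extinction_prob_power: "\<gamma> ^ n = offspring_mean p powr (- \<alpha> * real n)"
  using mean_gt_1 by (simp add: slope_at_extinction_prob_eq_powr powr_powr powr_realpow flip: powr_realpow)

lemma funpow_gen_fun_increment_le_powr: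
  obtains C where "0 < C" "\<And>n (s :: real). 0 \<le> s \<Longrightarrow> s < 1 \<Longrightarrow>
    (gen_fun p ^^ n) s - (gen_fun p ^^ n) 0 \<le> C * \<gamma> ^ n * (1 - s) powr (- \<alpha>)"
proof -
  have \<gamma>: "0 < \<gamma>"
    using slope_at_extinction_prob_pos[OF schroeder] .
  obtain r where r: "q < r" "r < 1" "gen_fun p r < r"
    using exists_gen_fun_less_above_extinction_prob by blast
  obtain A where A: "1 \<le> A" "\<And>t k. q \<le> t \<Longrightarrow> t \<le> r \<Longrightarrow> (gen_fun p ^^ k) t - q \<le> A * \<gamma> ^ k"
    using funpow_gen_fun_converges_geometrically[OF \<gamma> r] by blast
  obtain B where B: "\<And>s. q \<le> s \<Longrightarrow> s < 1 \<Longrightarrow>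
      \<exists>j. q \<le> (gen_fun p ^^ j) s \<and> (gen_fun p ^^ j) s \<le> r \<and> offspring_mean p ^ j \<le> B / (1 - s)"
    using exists_escape_time[OF r] by blast
  show ?thesis
  proof
    show "0 < A * B powr \<alpha> + 1"
      using A by (simp add: add_nonneg_pos)
    fix n and s :: real
    assume s: "0 \<le> s" "s < 1"
    have "1 \<le> (1 - s) powr (- \<alpha>)"
      using s schroeder_alpha_nonneg powr_le1[of \<alpha> "1 - s"]
      by (simp add: powr_minus_divide le_divide_eq)
    then have "q - (gen_fun p ^^ n) 0 \<le> \<gamma> ^ n * (1 - s) powr (- \<alpha>)"
      using extinction_prob_minus_funpow_gen_fun_0_le[of n] \<gamma> by (smt (verit) mult_le_cancel_left1 zero_less_power)
    moreover have "(gen_fun p ^^ n) s - q \<le> A * B powr \<alpha> * \<gamma> ^ n * (1 - s) powr (- \<alpha>)"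
    proof (cases "q \<le> s")
      case False
      then have "(gen_fun p ^^ n) s \<le> q"
        using funpow_gen_fun_mono[of s q n] funpow_gen_fun_extinction_prob s extinction_prob_less_1 by simp
      then show ?thesis
        using A \<gamma> by (smt (verit) mult_nonneg_nonneg powr_ge_zero zero_le_power)
    next
      case True
      then obtain j where j: "q \<le> (gen_fun p ^^ j) s" "(gen_fun p ^^ j) s \<le> r"
        and m_j: "offspring_mean p ^ j \<le> B / (1 - s)"
        using B s by blast
      have "(gen_fun p ^^ n) s - q \<le> A * \<gamma> ^ n / \<gamma> ^ j"
        using funpow_gen_fun_minus_extinction_prob_le_shifted[OF \<gamma> A _ _ j] s by simp
      also have "\<dots> = A * \<gamma> ^ n * (offspring_mean p ^ j) powr \<alpha>"
        using mean_gt_1 by (simp add: slope_at_extinction_prob_power powr_minus_divide powr_powr mult.commute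
            flip: powr_realpow)
      also have "\<dots> \<le> A * \<gamma> ^ n * (B powr \<alpha> * (1 - s) powr (- \<alpha>))"
        using powr_mono2[OF schroeder_alpha_nonneg _ m_j] mean_gt_1 s \<gamma> A
        by (intro mult_left_mono) (auto simp: powr_divide powr_minus_divide)
      finally show ?thesis
        by (simp add: mult_ac)
    qed
    ultimately show "(gen_fun p ^^ n) s - (gen_fun p ^^ n) 0 \<le> (A * B powr \<alpha> + 1) * \<gamma> ^ n * (1 - s) powr (- \<alpha>)"
      by (simp add: algebra_simps)
  qed
qed

lemma gw_pmf_small_values_le:
  obtains c where "0 < c"
    "\<And>n x. 0 < x \<Longrightarrow> (\<Sum>k\<in>{k. 1 \<le> k \<and> real k \<le> x}. pmf (gw_pmf p n) k) \<le> c * x powr \<alpha> * \<gamma> ^ n"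
proof -
  obtain C where C: "0 < C" "\<And>n (s :: real). 0 \<le> s \<Longrightarrow> s < 1 \<Longrightarrow>
      (gen_fun p ^^ n) s - (gen_fun p ^^ n) 0 \<le> C * \<gamma> ^ n * (1 - s) powr (- \<alpha>)"
    using funpow_gen_fun_increment_le_powr by blast
  show ?thesis
  proof
    show "0 < 2 * C * 2 powr \<alpha>"
      using C by simp
    fix n and x :: real
    assume "0 < x"
    show "(\<Sum>k\<in>{k. 1 \<le> k \<and> real k \<le> x}. pmf (gw_pmf p n) k) \<le> 2 * C * 2 powr \<alpha> * x powr \<alpha> * \<gamma> ^ n"
    proof (cases "1 \<le> x")
      case False
      then have "{k. 1 \<le> k \<and> real k \<le> x} = {}"
        by auto
      then show ?thesis
        using C slope_at_extinction_prob_pos[OF schroeder]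
        by (subst \<open>{k. 1 \<le> k \<and> real k \<le> x} = {}\<close>) simp
    next
      case True
      define s where "s = 1 - 1 / (2 * x)"
      have s: "0 \<le> s" "s < 1" "(1 - s) powr (- \<alpha>) = 2 powr \<alpha> * x powr \<alpha>"
        using True by (auto simp: s_def field_simps powr_minus_divide powr_divide powr_mult)
      have "(\<Sum>k\<in>{k. 1 \<le> k \<and> real k \<le> x}. pmf (gw_pmf p n) k)
          \<le> 2 * ((gen_fun p ^^ n) s - (gen_fun p ^^ n) 0)"
        using sum_pmf_le_gen_fun[OF True, of "gw_pmf p n"] gen_fun_gw_pmf[of s p n] gen_fun_gw_pmf[of 0 p n] s
        by (simp add: s_def)
      also have "\<dots> \<le> 2 * (C * \<gamma> ^ n * (1 - s) powr (- \<alpha>))"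
        using C(2)[OF s(1,2), of n] by simp
      also have "\<dots> = 2 * C * 2 powr \<alpha> * x powr \<alpha> * \<gamma> ^ n"
        by (simp add: s(3) algebra_simps)
      finally show ?thesis .
    qed
  qed
qed

end

theorem lemma5:
  fixes p :: "nat pmf" and M :: "'a measure" and X :: "nat \<Rightarrow> 'a \<Rightarrow> real"
  assumes mean_fin: "summable (\<lambda>k. pmf p k * real k)"
    and mean_gt1: "offspring_mean p > 1"
    and LlogL: "summable (\<lambda>k. pmf p k * (real k * ln (real k)))"
    and schroeder: "pmf p 0 + pmf p 1 > 0"
    and M: "prob_space M"
    and X_rv: "\<And>i. X i \<in> borel_measurable M"
    and X_indep: "prob_space.indep_vars M (\<lambda>_. borel) X UNIV"
    and X_id: "\<And>i. distr M borel (X i) = distr M borel (X 1)"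
    and X_int: "integrable M (\<lambda>\<omega>. (X 1 \<omega>)\<^sup>2)"
    and X_mean0: "prob_space.expectation M (X 1) = 0"
    and X_var_pos: "prob_space.expectation M (\<lambda>\<omega>. (X 1 \<omega>)\<^sup>2) > 0"
  shows "\<exists>c>0. \<forall>\<delta>>0. \<forall>\<epsilon>>0. \<forall>n\<ge>1.
    (\<Sum>k\<in>{k::nat. 1 \<le> k \<and> real k \<le> \<delta> / \<epsilon>\<^sup>2}.
        pmf (gw_pmf p n) k *
        measure M {\<omega>\<in>space M. (\<Sum>i\<in>{1..k}. X i \<omega>) \<ge> \<epsilon> * real k})
    \<le> c * \<delta> powr (schroeder_alpha p) * \<epsilon> powr (-2 * schroeder_alpha p)
        * offspring_mean p powr (- schroeder_alpha p * real n)"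
proof -
  interpret schroeder_offspring p
    by unfold_locales (fact mean_fin mean_gt1 LlogL schroeder)+
  obtain c where c: "0 < c" and small_values:
    "\<And>n x. 0 < x \<Longrightarrow> (\<Sum>k\<in>{k. 1 \<le> k \<and> real k \<le> x}. pmf (gw_pmf p n) k) \<le> c * x powr \<alpha> * \<gamma> ^ n"
    using gw_pmf_small_values_le by blast
  have "(\<Sum>k\<in>{k::nat. 1 \<le> k \<and> real k \<le> \<delta> / \<epsilon>\<^sup>2}.
        pmf (gw_pmf p n) k * measure M {\<omega>\<in>space M. (\<Sum>i\<in>{1..k}. X i \<omega>) \<ge> \<epsilon> * real k})
      \<le> c * \<delta> powr \<alpha> * \<epsilon> powr (-2 * \<alpha>) * offspring_mean p powr (- \<alpha> * real n)"
    if "0 < \<delta>" "0 < \<epsilon>" for \<delta> \<epsilon> :: real and n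
  proof -
    have "(\<Sum>k\<in>{k::nat. 1 \<le> k \<and> real k \<le> \<delta> / \<epsilon>\<^sup>2}.
          pmf (gw_pmf p n) k * measure M {\<omega>\<in>space M. (\<Sum>i\<in>{1..k}. X i \<omega>) \<ge> \<epsilon> * real k})
        \<le> (\<Sum>k\<in>{k::nat. 1 \<le> k \<and> real k \<le> \<delta> / \<epsilon>\<^sup>2}. pmf (gw_pmf p n) k)"
      using prob_space.prob_le_1[OF M] by (intro sum_mono mult_right_le_one_le) auto
    also have "\<dots> \<le> c * (\<delta> / \<epsilon>\<^sup>2) powr \<alpha> * \<gamma> ^ n"
      using small_values that by simp
    also have "(\<delta> / \<epsilon>\<^sup>2) powr \<alpha> = \<delta> powr \<alpha> * \<epsilon> powr (-2 * \<alpha>)"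
      using that by (simp add: powr_divide powr_minus_divide powr_powr flip: powr_numeral)
    finally show ?thesis
      by (simp add: slope_at_extinction_prob_power mult_ac)
  qed
  then show ?thesis
    using c by blast
qed

end
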